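(* Assume Hypothesis C. Let $L$ be a labeling and $\pi$ the priority rule keyed to $L$. Let $\tilde q(\cdot,\cdot)$ and $\tilde r(\cdot)$ be the finalized data obtained by running the Triangularizer on every bandit in accord with $L$, and define the $S\times S$ matrix $\tilde Q^{\pi}$ and the vector $\tilde R^{\pi}$ by $\tilde Q^{\pi}(s,t)=\tilde q(s_{\pi(s)},j)$ if $t=s_{\setminus\pi(s)}\cup\{j\}$ for some $j\in N_{\pi(s)}$ and $\tilde Q^{\pi}(s,t)=0$ otherwise, and $\tilde R^{\pi}(s)=\tilde r(s_{\pi(s)})$. Then $I-\tilde Q^{\pi}$ is invertible, and $\tilde V^{\pi}:=(I-\tilde Q^{\pi})^{-1}\tilde R^{\pi}$, the unique solution of $\tilde V^{\pi}=\tilde R^{\pi}+\tilde Q^{\pi}\tilde V^{\pi}$, satisfies $\tilde V^{\pi}=V^{\pi}$.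
   Context: There are $K$ bandits with pairwise disjoint finite nonempty state sets $N_1,\dots,N_K$; $N=N_1\cup\dots\cup N_K$; $b(j)$ is the $k$ with $j\in N_k$. Bandit $k$ has real transition rates $q(i,j)$ ($i,j\in N_k$) forming $q^k$ and real rewards $r(i)$ forming $r^k$. A multi-state $s$ contains exactly one state $s_k$ of each $N_k$; $S$ is the set of multi-states; $s_{\setminus k}=s\setminus\{s_k\}$. A stationary nonrandomized policy is a map $\delta:S\to\{1,\dots,K\}$. For such $\delta$, $Q^{\delta}(s,t)=q(s_{\delta(s)},j)$ if $t=s_{\setminus\delta(s)}\cup\{j\}$ with $j\in N_{\delta(s)}$, else $0$; $R^{\delta}(s)=r(s_{\delta(s)})$; $V^{\delta}=(I-Q^{\delta})^{-1}R^{\delta}$. A matrix is transient if its powers tend to $0$ entrywise. Hypothesis C: each $q^k$ is entrywise nonnegative and transient, and at least one of the following holds: (RN) each $q^k$ is substochastic ($\sum_{j\in N_k}q(i,j)\le1$); (RA) $r(i)\le0$ for all $i\in N$; (RS) $r(i)\ge0$ for all $i\in N$. (Under Hypothesis C each $Q^{\delta}$ is transient, so $V^{\delta}$ is well defined.) A labeling is an injective map $L:N\cup\{0\}\to\{1,\dots,|N|+1\}$ with $L(0)=|N|+1$; the priority rule keyed to $L$ is $\pi(s)=\arg\min\{L(s_k):1\le k\le K\}$. Triangularizer for bandit $k$ in accord with $L$: start with the tableau $[(I-q^k),r^k]$ and $M=N_k$; at each stage write the current tableau as $[(I-q),r]$. While $M\neq\emptyset$: let $i\in M$ minimize $L(i)$;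 multiply row $i$ by $1/[1-q(i,i)]$; for each $j\in M\setminus\{i\}$ replace row $j$ by itself plus $q(j,i)$ (current value) times the updated row $i$; remove $i$ from $M$. The final tableau is written $[(I-\tilde q^k),\tilde r^k]$; its entries are the finalized data $\tilde q(i,j)$, $\tilde r(i)$. *)

theory Defs
  imports Complex_Main
begin

definition idm :: "'b \<Rightarrow> 'b \<Rightarrow> real" where
  "idm s t = (if s = t then 1 else 0)"

definition mmult :: "'b set \<Rightarrow> ('b \<Rightarrow> 'b \<Rightarrow> real) \<Rightarrow> ('b \<Rightarrow> 'b \<Rightarrow> real) \<Rightarrow> 'b \<Rightarrow> 'b \<Rightarrow> real" where
  "mmult S A B = (\<lambda>s t. \<Sum>u\<in>S. A s u * B u t)"

fun mpow :: "'b set \<Rightarrow> ('b \<Rightarrow> 'b \<Rightarrow> real) \<Rightarrow> nat \<Rightarrow> 'b \<Rightarrow> 'b \<Rightarrow> real" where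
  "mpow S A 0 = idm"
| "mpow S A (Suc n) = mmult S (mpow S A n) A"

definition transient :: "'b set \<Rightarrow> ('b \<Rightarrow> 'b \<Rightarrow> real) \<Rightarrow> bool" where
  "transient S A = (\<forall>s\<in>S. \<forall>t\<in>S. (\<lambda>n. mpow S A n s t) \<longlonglongrightarrow> 0)"

definition inverse_on :: "'b set \<Rightarrow> ('b \<Rightarrow> 'b \<Rightarrow> real) \<Rightarrow> ('b \<Rightarrow> 'b \<Rightarrow> real) \<Rightarrow> bool" where
  "inverse_on S A B = (\<forall>s\<in>S. \<forall>t\<in>S. mmult S A B s t = idm s t \<and> mmult S B A s t = idm s t)"

definition invertible_on :: "'b set \<Rightarrow> ('b \<Rightarrow> 'b \<Rightarrow> real) \<Rightarrow> bool" where
  "invertible_on S A = (\<exists>B. inverse_on S A B)"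

definition minv :: "'b set \<Rightarrow> ('b \<Rightarrow> 'b \<Rightarrow> real) \<Rightarrow> 'b \<Rightarrow> 'b \<Rightarrow> real" where
  "minv S A = (SOME B. inverse_on S A B)"

definition mvmult :: "'b set \<Rightarrow> ('b \<Rightarrow> 'b \<Rightarrow> real) \<Rightarrow> ('b \<Rightarrow> real) \<Rightarrow> 'b \<Rightarrow> real" where
  "mvmult S A v = (\<lambda>s. \<Sum>t\<in>S. A s t * v t)"

definition value_vec :: "'b set \<Rightarrow> ('b \<Rightarrow> 'b \<Rightarrow> real) \<Rightarrow> ('b \<Rightarrow> real) \<Rightarrow> 'b \<Rightarrow> real" where
  "value_vec S Q R = mvmult S (minv S (\<lambda>s t. idm s t - Q s t)) R"

text \<open>Bandits are indexed by \<open>{1..K}\<close>; \<open>Nb k\<close> is the state set of bandit \<open>k\<close>.\<close>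

definition Nall :: "nat \<Rightarrow> (nat \<Rightarrow> 'a set) \<Rightarrow> 'a set" where
  "Nall K Nb = (\<Union>k\<in>{1..K}. Nb k)"

definition bof :: "nat \<Rightarrow> (nat \<Rightarrow> 'a set) \<Rightarrow> 'a \<Rightarrow> nat" where
  "bof K Nb j = (THE k. k \<in> {1..K} \<and> j \<in> Nb k)"

definition msts :: "nat \<Rightarrow> (nat \<Rightarrow> 'a set) \<Rightarrow> 'a set set" where
  "msts K Nb = {s. s \<subseteq> Nall K Nb \<and> (\<forall>k\<in>{1..K}. card (s \<inter> Nb k) = 1)}"

definition comp :: "(nat \<Rightarrow> 'a set) \<Rightarrow> 'a set \<Rightarrow> nat \<Rightarrow> 'a" where
  "comp Nb s k = (THE x. x \<in> s \<inter> Nb k)"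

definition Qpol :: "(nat \<Rightarrow> 'a set) \<Rightarrow> ('a \<Rightarrow> 'a \<Rightarrow> real) \<Rightarrow> ('a set \<Rightarrow> nat) \<Rightarrow> 'a set \<Rightarrow> 'a set \<Rightarrow> real" where
  "Qpol Nb q \<delta> s t =
     (let k = \<delta> s; x = comp Nb s k in
      if (\<exists>j\<in>Nb k. t = insert j (s - {x}))
      then q x (THE j. j \<in> Nb k \<and> t = insert j (s - {x}))
      else 0)"

definition Rpol :: "(nat \<Rightarrow> 'a set) \<Rightarrow> ('a \<Rightarrow> real) \<Rightarrow> ('a set \<Rightarrow> nat) \<Rightarrow> 'a set \<Rightarrow> real" where
  "Rpol Nb r \<delta> s = r (comp Nb s (\<delta> s))"

definition hypC :: "nat \<Rightarrow> (nat \<Rightarrow> 'a set) \<Rightarrow> ('a \<Rightarrow> 'a \<Rightarrow> real) \<Rightarrow> ('a \<Rightarrow> real) \<Rightarrow> bool" where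
  "hypC K Nb q r =
    ((\<forall>k\<in>{1..K}. (\<forall>i\<in>Nb k. \<forall>j\<in>Nb k. 0 \<le> q i j) \<and> transient (Nb k) q) \<and>
     ((\<forall>k\<in>{1..K}. \<forall>i\<in>Nb k. (\<Sum>j\<in>Nb k. q i j) \<le> 1) \<or>
      (\<forall>i\<in>Nall K Nb. r i \<le> 0) \<or>
      (\<forall>i\<in>Nall K Nb. r i \<ge> 0)))"

text \<open>The extra state \<open>0\<close> is represented by \<open>None\<close>, a state \<open>i\<close> by \<open>Some i\<close>.\<close>
definition is_labeling :: "'a set \<Rightarrow> ('a option \<Rightarrow> nat) \<Rightarrow> bool" where
  "is_labeling N L =
    (inj_on L (insert None (Some ` N)) \<and>
     L ` (insert None (Some ` N)) \<subseteq> {1..card N + 1} \<and>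
     L None = card N + 1)"

definition prio :: "nat \<Rightarrow> (nat \<Rightarrow> 'a set) \<Rightarrow> ('a option \<Rightarrow> nat) \<Rightarrow> 'a set \<Rightarrow> nat" where
  "prio K Nb L s = (ARG_MIN (\<lambda>k. L (Some (comp Nb s k))) k. k \<in> {1..K})"

text \<open>A tableau \<open>[(I - q), r]\<close> is a pair (matrix part \<open>T = I - q\<close>, last column).
  One stage with pivot \<open>i\<close>, where \<open>M'\<close> is \<open>M - {i}\<close>.\<close>
definition tri_step :: "('a \<Rightarrow> 'a \<Rightarrow> real) \<times> ('a \<Rightarrow> real) \<Rightarrow> 'a \<Rightarrow> 'a set
    \<Rightarrow> ('a \<Rightarrow> 'a \<Rightarrow> real) \<times> ('a \<Rightarrow> real)" where
  "tri_step tab i M' =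
    (let T = fst tab; c = snd tab;
         qc = (\<lambda>x y. idm x y - T x y);
         f = 1 / (1 - qc i i);
         rowT = (\<lambda>l. f * T i l);
         rowc = f * c i
     in ((\<lambda>j l. if j = i then rowT l else if j \<in> M' then T j l + qc j i * rowT l else T j l),
         (\<lambda>j. if j = i then rowc else if j \<in> M' then c j + qc j i * rowc else c j)))"

fun tri_loop :: "('a \<Rightarrow> nat) \<Rightarrow> nat \<Rightarrow> 'a set \<Rightarrow> ('a \<Rightarrow> 'a \<Rightarrow> real) \<times> ('a \<Rightarrow> real)
    \<Rightarrow> ('a \<Rightarrow> 'a \<Rightarrow> real) \<times> ('a \<Rightarrow> real)" where
  "tri_loop Lab 0 M tab = tab"
| "tri_loop Lab (Suc n) M tab =
     (if M = {} then tab
      else (let i = (ARG_MIN Lab i. i \<in> M) in tri_loop Lab n (M - {i}) (tri_step tab i (M - {i}))))"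

text \<open>Triangularizer for bandit \<open>k\<close> in accord with \<open>L\<close>, started from \<open>[(I - q^k), r^k]\<close>
  with \<open>M = N_k\<close>; the loop runs while \<open>M \<noteq> {}\<close> (exactly \<open>card (N_k)\<close> stages).\<close>
definition triangularizer :: "('a option \<Rightarrow> nat) \<Rightarrow> (nat \<Rightarrow> 'a set) \<Rightarrow> ('a \<Rightarrow> 'a \<Rightarrow> real)
    \<Rightarrow> ('a \<Rightarrow> real) \<Rightarrow> nat \<Rightarrow> ('a \<Rightarrow> 'a \<Rightarrow> real) \<times> ('a \<Rightarrow> real)" where
  "triangularizer L Nb q r k =
     tri_loop (\<lambda>i. L (Some i)) (card (Nb k)) (Nb k) ((\<lambda>i j. idm i j - q i j), r)"

definition qtil :: "nat \<Rightarrow> (nat \<Rightarrow> 'a set) \<Rightarrow> ('a option \<Rightarrow> nat) \<Rightarrow> ('a \<Rightarrow> 'a \<Rightarrow> real)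
    \<Rightarrow> ('a \<Rightarrow> real) \<Rightarrow> 'a \<Rightarrow> 'a \<Rightarrow> real" where
  "qtil K Nb L q r i j = idm i j - fst (triangularizer L Nb q r (bof K Nb i)) i j"

definition rtil :: "nat \<Rightarrow> (nat \<Rightarrow> 'a set) \<Rightarrow> ('a option \<Rightarrow> nat) \<Rightarrow> ('a \<Rightarrow> 'a \<Rightarrow> real)
    \<Rightarrow> ('a \<Rightarrow> real) \<Rightarrow> 'a \<Rightarrow> real" where
  "rtil K Nb L q r i = snd (triangularizer L Nb q r (bof K Nb i)) i"

end

theory Submission
  imports Defs "Jordan_Normal_Form.Determinant"
begin

(* The proof has three independent ingredients.
   (1) Finite linear algebra: on a finite index set, I - P is invertible as soon as
       X = P X forces X = 0.  Two sufficient conditions are proved: P only moves to states of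
       strictly larger potential (then X = P X is solved "from the top"), or P is nonnegative
       and admits a Lyapunov vector H > 0 with P H < H (then |X| <= c H with minimal c forces
       c = 0).
   (2) The Triangularizer: each stage is an elementary row operation, so every linear
       equation satisfied by the rows of the tableau survives; and, given a Lyapunov vector of
       the transient matrix q^k, every pivot is positive and the final tableau has unit
       diagonal and zeros below the label order.
   (3) Multi-states: a policy moves only the component of its active bandit.  Consequently the
       finalized data make I - Q~^pi invertible (the label sum is a strictly increasing
       potential), a product of per-bandit Lyapunov vectors makes I - Q^pi invertible, and
       V^pi satisfies the finalized equations, because pi keeps the same bandit active at all
       states reached from s by moving its active component to a state of smaller label. *)

section \<open>Finite matrices indexed by a set\<close>

lemma sum_idm: "finite S \<Longrightarrow> s \<in> S \<Longrightarrow> (\<Sum>t\<in>S. idm s t * f t) = f s"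
  unfolding idm_def by (subst sum.cong[OF refl, of _ _ "\<lambda>t. if s = t then f t else 0"]) auto

lemma sum_idm_minus:
  "finite S \<Longrightarrow> s \<in> S \<Longrightarrow> (\<Sum>t\<in>S. (idm s t - A s t) * f t) = f s - (\<Sum>t\<in>S. A s t * f t)"
  by (simp add: left_diff_distrib sum_subtractf sum_idm)

lemma mmult_assoc: "mmult S (mmult S A B) C s t = mmult S A (mmult S B C) s t"
  unfolding mmult_def
  by (simp add: sum_distrib_left sum_distrib_right mult.assoc) (rule sum.swap)

lemma mmult_idm_left: "finite S \<Longrightarrow> s \<in> S \<Longrightarrow> mmult S idm A s t = A s t"
  unfolding mmult_def by (simp add: sum_idm)

lemma mmult_idm_right: "finite S \<Longrightarrow> t \<in> S \<Longrightarrow> mmult S A idm s t = A s t"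
  unfolding mmult_def idm_def
  by (subst sum.cong[OF refl, of _ _ "\<lambda>u. if u = t then A s u else 0"]) auto

lemma mmult_cong:
  assumes "\<And>u. u \<in> S \<Longrightarrow> A s u = A' s u" "\<And>u. u \<in> S \<Longrightarrow> B u t = B' u t"
  shows "mmult S A B s t = mmult S A' B' s t"
  unfolding mmult_def using assms by (intro sum.cong) auto

text \<open>Powers can also be unfolded on the left; this is what relates \<open>q\<close> times the row
  sums of \<open>q^n\<close> to the row sums of \<open>q^{n+1}\<close>.\<close>
lemma mpow_Suc_left:
  assumes "finite S" "s \<in> S" "t \<in> S"
  shows "mpow S A (Suc n) s t = mmult S A (mpow S A n) s t"
  using assms(2,3)
proof (induction n arbitrary: s t)
  case 0
  then show ?case using assms(1) by (simp add: mmult_idm_left mmult_idm_right)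
next
  case (Suc n)
  have "mpow S A (Suc (Suc n)) s t = mmult S (mpow S A (Suc n)) A s t" by simp
  also have "\<dots> = mmult S (mmult S A (mpow S A n)) A s t"
    using Suc by (intro mmult_cong) auto
  also have "\<dots> = mmult S A (mmult S (mpow S A n) A) s t" by (rule mmult_assoc)
  finally show ?case by simp
qed

lemma mpow_nonneg:
  assumes "\<forall>i\<in>S. \<forall>j\<in>S. 0 \<le> A i j" "t \<in> S"
  shows "0 \<le> mpow S A n s t"
  using assms(2)
proof (induction n arbitrary: t)
  case 0 then show ?case by (simp add: idm_def)
next
  case (Suc n) then show ?case using assms(1) by (auto simp: mmult_def intro!: sum_nonneg)
qed

text \<open>A square matrix over a finite index set with trivial kernel is invertible; this is
  transported from the determinant theory of Jordan_Normal_Form along an enumeration of the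
  index set.\<close>
lemma invertible_if_injective:
  fixes A :: "'b \<Rightarrow> 'b \<Rightarrow> real"
  assumes fin: "finite S"
    and inj: "\<And>x. \<forall>s\<in>S. (\<Sum>t\<in>S. A s t * x t) = 0 \<Longrightarrow> \<forall>s\<in>S. x s = 0"
  shows "invertible_on S A"
proof -
  define n where "n = card S"
  obtain e where e: "bij_betw e {0..<n} S" using ex_bij_betw_nat_finite[OF fin] n_def by blast
  define ei where "ei = inv_into {0..<n} e"
  have eiS: "\<And>s. s \<in> S \<Longrightarrow> ei s < n \<and> e (ei s) = s"
    using e unfolding ei_def
    by (metis atLeastLessThan_iff bij_betw_imp_surj_on f_inv_into_f inv_into_into)
  have eS: "\<And>i. i < n \<Longrightarrow> e i \<in> S \<and> ei (e i) = i"
    using e unfolding ei_def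
    by (metis atLeast0LessThan bij_betw_imp_surj_on bij_betw_inv_into_left image_eqI lessThan_iff)
  have reidx: "\<And>g. (\<Sum>t\<in>S. g t) = (\<Sum>j\<in>{0..<n}. g (e j))"
    using sum.reindex_bij_betw[OF e] by metis
  define M where "M = mat n n (\<lambda>(i,j). A (e i) (e j))"
  have Mc: "M \<in> carrier_mat n n" unfolding M_def by simp
  have "det M \<noteq> 0"
  proof
    assume "det M = 0"
    then obtain v where v: "v \<in> carrier_vec n" "v \<noteq> 0\<^sub>v n" "M *\<^sub>v v = 0\<^sub>v n"
      using det_0_iff_vec_prod_zero_field[OF Mc] by blast
    define x where "x t = v $ (ei t)" for t
    have "\<forall>s\<in>S. (\<Sum>t\<in>S. A s t * x t) = 0"
    proof
      fix s assume s: "s \<in> S"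
      have "(\<Sum>t\<in>S. A s t * x t) = (\<Sum>j\<in>{0..<n}. A s (e j) * v $ j)"
        unfolding reidx x_def using eS by simp
      also have "\<dots> = (M *\<^sub>v v) $ (ei s)"
        using eiS[OF s] v(1) unfolding M_def by (simp add: scalar_prod_def)
      also have "\<dots> = 0" using v(3) eiS[OF s] by simp
      finally show "(\<Sum>t\<in>S. A s t * x t) = 0" .
    qed
    from inj[OF this] have "\<And>j. j < n \<Longrightarrow> v $ j = 0"
      using eS unfolding x_def by metis
    hence "v = 0\<^sub>v n" using v(1) by (intro eq_vecI) auto
    with v(2) show False by simp
  qed
  from det_non_zero_imp_unit[OF Mc this, of "()"]
  obtain B where B: "B \<in> carrier_mat n n" "B * M = 1\<^sub>m n" "M * B = 1\<^sub>m n"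
    unfolding Units_def ring_mat_def by auto
  define Bf where "Bf s t = B $$ (ei s, ei t)" for s t
  have "inverse_on S A Bf"
    unfolding inverse_on_def
  proof (intro ballI conjI)
    fix s t assume s: "s \<in> S" and t: "t \<in> S"
    have eq: "(ei s = ei t) = (s = t)" using eiS[OF s] eiS[OF t] by metis
    have "mmult S A Bf s t = (\<Sum>k\<in>{0..<n}. A s (e k) * B $$ (k, ei t))"
      unfolding mmult_def Bf_def reidx using eS by simp
    also have "\<dots> = (M * B) $$ (ei s, ei t)"
      using eiS[OF s] eiS[OF t] B(1) unfolding M_def by (simp add: scalar_prod_def)
    also have "\<dots> = idm s t" using B(3) eiS[OF s] eiS[OF t] unfolding idm_def by (simp add: eq)
    finally show "mmult S A Bf s t = idm s t" .
    have "mmult S Bf A s t = (\<Sum>k\<in>{0..<n}. B $$ (ei s, k) * A (e k) t)"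
      unfolding mmult_def Bf_def reidx using eS by simp
    also have "\<dots> = (B * M) $$ (ei s, ei t)"
      using eiS[OF s] eiS[OF t] B(1) unfolding M_def by (simp add: scalar_prod_def)
    also have "\<dots> = idm s t" using B(2) eiS[OF s] eiS[OF t] unfolding idm_def by (simp add: eq)
    finally show "mmult S Bf A s t = idm s t" .
  qed
  thus ?thesis unfolding invertible_on_def by blast
qed

lemma invertible_if_no_fixed_vector:
  assumes fin: "finite S"
    and fix0: "\<And>X. \<forall>s\<in>S. X s = (\<Sum>t\<in>S. P s t * X t) \<Longrightarrow> \<forall>s\<in>S. X s = 0"
  shows "invertible_on S (\<lambda>s t. idm s t - P s t)"
proof (rule invertible_if_injective[OF fin])
  fix X assume "\<forall>s\<in>S. (\<Sum>t\<in>S. (idm s t - P s t) * X t) = 0"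
  then have "\<forall>s\<in>S. X s = (\<Sum>t\<in>S. P s t * X t)" using sum_idm_minus[OF fin] by auto
  then show "\<forall>s\<in>S. X s = 0" by (rule fix0)
qed

lemma inverse_on_minv: "invertible_on S A \<Longrightarrow> inverse_on S A (minv S A)"
  using someI_ex[of "inverse_on S A"] unfolding invertible_on_def minv_def by blast

lemma value_vec_solves:
  assumes fin: "finite S" and inv: "invertible_on S (\<lambda>s t. idm s t - Q s t)" and s: "s \<in> S"
  shows "value_vec S Q R s - (\<Sum>t\<in>S. Q s t * value_vec S Q R t) = R s"
proof -
  let ?A = "\<lambda>s t. idm s t - Q s t" let ?B = "minv S ?A"
  have "(\<Sum>t\<in>S. ?A s t * mvmult S ?B R t) = (\<Sum>u\<in>S. mmult S ?A ?B s u * R u)"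
    unfolding mmult_def mvmult_def
    by (simp add: sum_distrib_left sum_distrib_right mult.assoc) (rule sum.swap)
  also have "\<dots> = (\<Sum>u\<in>S. idm s u * R u)"
    using inverse_on_minv[OF inv] s unfolding inverse_on_def by simp
  also have "\<dots> = R s" by (rule sum_idm[OF fin s])
  finally show ?thesis unfolding value_vec_def using sum_idm_minus[OF fin s] by simp
qed

lemma value_vec_unique:
  assumes fin: "finite S" and inv: "invertible_on S (\<lambda>s t. idm s t - Q s t)"
    and V: "\<forall>s\<in>S. V s - (\<Sum>t\<in>S. Q s t * V t) = R s" and s: "s \<in> S"
  shows "value_vec S Q R s = V s"
proof -
  let ?A = "\<lambda>s t. idm s t - Q s t" let ?B = "minv S ?A"
  have AV: "\<forall>t\<in>S. (\<Sum>u\<in>S. ?A t u * V u) = R t" using V sum_idm_minus[OF fin] by simp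
  have "mvmult S ?B R s = (\<Sum>t\<in>S. ?B s t * (\<Sum>u\<in>S. ?A t u * V u))"
    unfolding mvmult_def using AV by simp
  also have "\<dots> = (\<Sum>u\<in>S. mmult S ?B ?A s u * V u)"
    unfolding mmult_def
    by (simp add: sum_distrib_left sum_distrib_right mult.assoc) (rule sum.swap)
  also have "\<dots> = (\<Sum>u\<in>S. idm s u * V u)"
    using inverse_on_minv[OF inv] s unfolding inverse_on_def by simp
  also have "\<dots> = V s" by (rule sum_idm[OF fin s])
  finally show ?thesis unfolding value_vec_def .
qed

section \<open>Two criteria for a trivial fixed space\<close>

text \<open>If every transition of \<open>P\<close> strictly increases a potential, then \<open>X = P X\<close> forces
  \<open>X = 0\<close>: at a nonzero entry of maximal potential, \<open>X s\<close> is a combination of entries of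
  larger potential, which all vanish.\<close>
lemma potential_fixed_vector_zero:
  fixes P :: "'b \<Rightarrow> 'b \<Rightarrow> real" and X :: "'b \<Rightarrow> real" and phi :: "'b \<Rightarrow> nat"
  assumes fin: "finite S"
    and incr: "\<And>s t. s \<in> S \<Longrightarrow> t \<in> S \<Longrightarrow> P s t \<noteq> 0 \<Longrightarrow> phi s < phi t"
    and X: "\<forall>s\<in>S. X s = (\<Sum>t\<in>S. P s t * X t)"
  shows "\<forall>s\<in>S. X s = 0"
proof (rule ccontr)
  define Z where "Z = {s\<in>S. X s \<noteq> 0}"
  assume "\<not> (\<forall>s\<in>S. X s = 0)"
  then have "Z \<noteq> {}" "finite Z" using fin unfolding Z_def by auto
  then have "Max (phi ` Z) \<in> phi ` Z" by (intro Max_in) auto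
  then obtain s where sZ: "s \<in> Z" and sm: "phi s = Max (phi ` Z)" by (metis imageE)
  have smax: "phi s' \<le> phi s" if "s' \<in> Z" for s'
    unfolding sm using \<open>finite Z\<close> that by (intro Max_ge) auto
  have s: "s \<in> S" using sZ Z_def by simp
  have terms0: "P s t * X t = 0" if t: "t \<in> S" for t
  proof (cases "P s t = 0")
    case False
    then have "phi s < phi t" using incr[OF s t] by blast
    then have "t \<notin> Z" using smax by fastforce
    then show ?thesis using t Z_def by simp
  qed simp
  have "X s = (\<Sum>t\<in>S. P s t * X t)" using X s by blast
  also have "\<dots> = 0" using terms0 by (intro sum.neutral) blast
  finally show False using sZ Z_def by simp
qed

text \<open>If \<open>P\<close> is nonnegative and \<open>P H < H\<close> for some \<open>H > 0\<close>, then \<open>X = P X\<close> forces \<open>X = 0\<close>: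
  with \<open>c\<close> the least constant such that \<open>|X| \<le> c H\<close>, equality holds at some \<open>s0\<close>, so
  \<open>c H s0 \<le> c (P H) s0\<close>, which is only possible for \<open>c = 0\<close>.\<close>
lemma lyapunov_fixed_vector_zero:
  fixes P :: "'b \<Rightarrow> 'b \<Rightarrow> real" and X H :: "'b \<Rightarrow> real"
  assumes fin: "finite S"
    and P0: "\<And>s t. s \<in> S \<Longrightarrow> t \<in> S \<Longrightarrow> 0 \<le> P s t"
    and Hpos: "\<And>s. s \<in> S \<Longrightarrow> 0 < H s"
    and PH: "\<And>s. s \<in> S \<Longrightarrow> (\<Sum>t\<in>S. P s t * H t) < H s"
    and X: "\<forall>s\<in>S. X s = (\<Sum>t\<in>S. P s t * X t)"
  shows "\<forall>s\<in>S. X s = 0"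
proof (cases "S = {}")
  case False
  define c where "c = Max ((\<lambda>s. \<bar>X s\<bar> / H s) ` S)"
  have bound: "\<bar>X t\<bar> \<le> c * H t" if t: "t \<in> S" for t
  proof -
    have "\<bar>X t\<bar> / H t \<le> c" unfolding c_def using fin t by (intro Max_ge) auto
    then show ?thesis using Hpos[OF t] by (simp add: divide_le_eq)
  qed
  have "c \<in> (\<lambda>s. \<bar>X s\<bar> / H s) ` S" unfolding c_def using fin False by (intro Max_in) auto
  then obtain s0 where s0: "s0 \<in> S" and cs0: "c = \<bar>X s0\<bar> / H s0" by blast
  have c0: "0 \<le> c" unfolding cs0 using Hpos[OF s0] by simp
  have "c * H s0 = \<bar>\<Sum>t\<in>S. P s0 t * X t\<bar>" unfolding cs0 using Hpos[OF s0] X s0 by simp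
  also have "\<dots> \<le> (\<Sum>t\<in>S. \<bar>P s0 t * X t\<bar>)" by (rule sum_abs)
  also have "\<dots> \<le> (\<Sum>t\<in>S. P s0 t * (c * H t))"
    using P0[OF s0] bound by (intro sum_mono) (simp add: abs_mult mult_left_mono)
  also have "\<dots> = c * (\<Sum>t\<in>S. P s0 t * H t)"
    by (simp add: sum_distrib_left algebra_simps)
  finally have "c * H s0 \<le> c * (\<Sum>t\<in>S. P s0 t * H t)" .
  then have "c = 0" using c0 PH[OF s0] by (smt (verit) mult_strict_left_mono)
  then show ?thesis using bound by simp
qed simp

section \<open>Lyapunov vectors of transient matrices\<close>

definition lyapunov_vector :: "'b set \<Rightarrow> ('b \<Rightarrow> 'b \<Rightarrow> real) \<Rightarrow> ('b \<Rightarrow> real) \<Rightarrow> bool" where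
  "lyapunov_vector S q h \<longleftrightarrow> (\<forall>j\<in>S. 0 \<le> h j \<and> 1 \<le> h j - (\<Sum>l\<in>S. q j l * h l))"

lemma lyapunov_vector_ge_1:
  assumes "lyapunov_vector S q h" "\<forall>i\<in>S. \<forall>j\<in>S. 0 \<le> q i j" "j \<in> S"
  shows "1 \<le> h j"
proof -
  have "0 \<le> (\<Sum>l\<in>S. q j l * h l)"
    using assms unfolding lyapunov_vector_def by (intro sum_nonneg mult_nonneg_nonneg) auto
  then show ?thesis using assms unfolding lyapunov_vector_def by auto
qed

text \<open>A nonnegative transient matrix has a Lyapunov vector: twice the truncated series
  \<open>\<Sum>n<N. q^n 1\<close>, where \<open>N\<close> is chosen with \<open>q^N 1 < 1/2\<close>.\<close>
lemma transient_lyapunov_vector: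
  assumes fin: "finite S" and nn: "\<forall>i\<in>S. \<forall>j\<in>S. 0 \<le> q i j" and tr: "transient S q"
  obtains h where "lyapunov_vector S q h"
proof -
  define v where "v n j = (\<Sum>t\<in>S. mpow S q n j t)" for n j
  have lim: "(\<lambda>n. v n j) \<longlonglongrightarrow> 0" if "j \<in> S" for j
    using tr that unfolding transient_def v_def by (auto intro!: tendsto_null_sum)
  have "eventually (\<lambda>n. v n j < 1/2) sequentially" if "j \<in> S" for j
    by (rule order_tendstoD(2)[OF lim[OF that]]) simp
  hence "eventually (\<lambda>n. \<forall>j\<in>S. v n j < 1/2) sequentially"
    using fin by (simp add: eventually_ball_finite)
  then obtain N where N: "\<forall>j\<in>S. v N j < 1/2" by (auto simp: eventually_sequentially)
  define h where "h j = 2 * (\<Sum>n<N. v n j)" for j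
  have vnn: "\<And>n j. 0 \<le> v n j" unfolding v_def using mpow_nonneg[OF nn] by (simp add: sum_nonneg)
  have v0: "\<And>j. j \<in> S \<Longrightarrow> v 0 j = 1"
    unfolding v_def using fin by (simp add: idm_def[abs_def])
  have qv: "(\<Sum>l\<in>S. q j l * v n l) = v (Suc n) j" if j: "j \<in> S" for n j
  proof -
    have "(\<Sum>l\<in>S. q j l * v n l) = (\<Sum>t\<in>S. \<Sum>l\<in>S. q j l * mpow S q n l t)"
      unfolding v_def by (simp add: sum_distrib_left) (rule sum.swap)
    also have "\<dots> = v (Suc n) j"
      using mpow_Suc_left[OF fin j] unfolding mmult_def v_def by simp
    finally show ?thesis .
  qed
  have "lyapunov_vector S q h"
    unfolding lyapunov_vector_def
  proof (intro ballI conjI)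
    fix j assume j: "j \<in> S"
    show "0 \<le> h j" unfolding h_def using vnn by (simp add: sum_nonneg)
    have "(\<Sum>l\<in>S. q j l * h l) = 2 * (\<Sum>n<N. v (Suc n) j)"
      unfolding h_def using qv[OF j]
      by (simp add: sum_distrib_left sum_distrib_right mult.assoc mult.left_commute)
        (subst sum.swap, simp add: sum_distrib_left[symmetric])
    also have "\<dots> = h j - 2 * (v 0 j - v N j)"
      unfolding h_def using sum_lessThan_telescope[of "\<lambda>n. v n j" N]
      by (simp add: sum_subtractf algebra_simps)
    finally show "1 \<le> h j - (\<Sum>l\<in>S. q j l * h l)" using v0[OF j] N j by auto
  qed
  then show thesis by (rule that)
qed

section \<open>The Triangularizer\<close>

lemma arg_min_in_set:
  fixes Lab :: "'a \<Rightarrow> nat"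
  assumes "M \<noteq> {}"
  shows "arg_min Lab (\<lambda>i. i \<in> M) \<in> M \<and> (\<forall>j\<in>M. Lab (arg_min Lab (\<lambda>i. i \<in> M)) \<le> Lab j)"
  using assms arg_min_nat_lemma[of "\<lambda>i. i \<in> M"] by blast

lemma tri_loop_invariant:
  fixes Lab :: "'a \<Rightarrow> nat"
  assumes "finite M" "card M \<le> n" "P M tab"
   and step: "\<And>M tab. finite M \<Longrightarrow> M \<noteq> {} \<Longrightarrow> P M tab \<Longrightarrow>
      P (M - {arg_min Lab (\<lambda>i. i \<in> M)})
        (tri_step tab (arg_min Lab (\<lambda>i. i \<in> M)) (M - {arg_min Lab (\<lambda>i. i \<in> M)}))"
  shows "P {} (tri_loop Lab n M tab)"
  using assms(1-3)
proof (induction n arbitrary: M tab)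
  case 0
  then show ?case by simp
next
  case (Suc n)
  show ?case
  proof (cases "M = {}")
    case True then show ?thesis using Suc by simp
  next
    case False
    define i where "i = arg_min Lab (\<lambda>i. i \<in> M)"
    have iM: "i \<in> M" using arg_min_in_set[OF False] i_def by blast
    have "P {} (tri_loop Lab n (M - {i}) (tri_step tab i (M - {i})))"
      using Suc.prems iM step[OF Suc.prems(1) False Suc.prems(3)] i_def
      by (intro Suc.IH) auto
    then show ?thesis using False i_def by (simp add: Let_def)
  qed
qed

lemma tri_step_fst:
  "fst (tri_step (T, c) i M') j l =
    (if j = i then (1 / T i i) * T i l
     else if j \<in> M' then T j l + (idm j i - T j i) * ((1 / T i i) * T i l) else T j l)"
  unfolding tri_step_def Let_def by (simp add: idm_def)

lemma tri_step_snd: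
  "snd (tri_step (T, c) i M') j =
    (if j = i then (1 / T i i) * c i
     else if j \<in> M' then c j + (idm j i - T j i) * ((1 / T i i) * c i) else c j)"
  unfolding tri_step_def Let_def by (simp add: idm_def)

definition triangularizing ::
    "('a \<Rightarrow> nat) \<Rightarrow> 'a set \<Rightarrow> ('a \<Rightarrow> real) \<Rightarrow> 'a set \<Rightarrow> ('a \<Rightarrow> 'a \<Rightarrow> real) \<Rightarrow> bool" where
  "triangularizing Lab S h M T \<longleftrightarrow> M \<subseteq> S \<and>
     (\<forall>j\<in>M. \<forall>l\<in>S. l \<noteq> j \<longrightarrow> T j l \<le> 0) \<and>
     (\<forall>j\<in>M. 1 \<le> (\<Sum>l\<in>S. T j l * h l)) \<and>
     (\<forall>j\<in>M. \<forall>p\<in>S - M. T j p = 0) \<and>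
     (\<forall>i\<in>S - M. T i i = 1 \<and> (\<forall>l\<in>S. Lab l < Lab i \<longrightarrow> T i l = 0))"

text \<open>Under the invariant every unprocessed row has a positive diagonal entry, so the
  division performed at a pivot is legitimate.\<close>
lemma triangularizing_pivot_pos:
  assumes fS: "finite S" and h: "\<forall>j\<in>S. 0 \<le> h j"
    and inv: "triangularizing Lab S h M T" and iM: "i \<in> M"
  shows "0 < T i i"
proof -
  have iS: "i \<in> S" using inv iM unfolding triangularizing_def by auto
  have "(\<Sum>l\<in>S. T i l * h l) = T i i * h i + (\<Sum>l\<in>S - {i}. T i l * h l)"
    using fS iS by (simp add: sum.remove)
  moreover have "(\<Sum>l\<in>S - {i}. T i l * h l) \<le> 0"
    using inv iM h unfolding triangularizing_def
    by (intro sum_nonpos) (auto intro: mult_nonpos_nonneg)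
  ultimately have "1 \<le> T i i * h i" using inv iM unfolding triangularizing_def by force
  then show ?thesis using h iS by (smt (verit) mult_nonpos_nonneg)
qed

lemma triangularizing_step:
  fixes Lab :: "'a \<Rightarrow> nat"
  assumes fS: "finite S" and h: "\<forall>j\<in>S. 0 \<le> h j"
    and ne: "M \<noteq> {}" and inv: "triangularizing Lab S h M T"
    and i_def: "i = arg_min Lab (\<lambda>i. i \<in> M)"
  shows "triangularizing Lab S h (M - {i}) (fst (tri_step (T, c) i (M - {i})))"
proof -
  have iM: "i \<in> M" and imin: "\<forall>j\<in>M. Lab i \<le> Lab j" using arg_min_in_set[OF ne] i_def by auto
  have MS: "M \<subseteq> S" and a: "\<forall>j\<in>M. \<forall>l\<in>S. l \<noteq> j \<longrightarrow> T j l \<le> 0"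
    and b: "\<forall>j\<in>M. 1 \<le> (\<Sum>l\<in>S. T j l * h l)"
    and d: "\<forall>j\<in>M. \<forall>p\<in>S - M. T j p = 0"
    and c: "\<forall>i\<in>S - M. T i i = 1 \<and> (\<forall>l\<in>S. Lab l < Lab i \<longrightarrow> T i l = 0)"
    using inv unfolding triangularizing_def by auto
  have iS: "i \<in> S" using iM MS by auto
  define f where "f = 1 / T i i"
  have f: "f > 0" "f * T i i = 1"
    using triangularizing_pivot_pos[OF fS h inv iM] unfolding f_def by auto
  let ?T' = "fst (tri_step (T, c) i (M - {i}))"
  have T'i: "\<And>l. ?T' i l = f * T i l" unfolding tri_step_fst f_def by simp
  have T'j: "\<And>j l. j \<in> M - {i} \<Longrightarrow> ?T' j l = T j l + (- T j i) * (f * T i l)"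
    unfolding tri_step_fst f_def idm_def by auto
  have T'o: "\<And>j l. j \<notin> M \<Longrightarrow> ?T' j l = T j l"
    unfolding tri_step_fst using iM by auto
  have T'ji: "\<And>j. j \<in> M - {i} \<Longrightarrow> ?T' j i = 0" using T'j f(2) by (simp add: mult.commute)
  show ?thesis
    unfolding triangularizing_def
  proof (intro conjI ballI impI)
    show "M - {i} \<subseteq> S" using MS by auto
  next
    fix j l assume j: "j \<in> M - {i}" and l: "l \<in> S" "l \<noteq> j"
    show "?T' j l \<le> 0"
    proof (cases "l = i")
      case False
      have "T j l \<le> 0" "T i l \<le> 0" "T j i \<le> 0" using a j l iM iS False by auto
      then have "(- T j i) * (f * T i l) \<le> 0"
        using f(1) by (simp add: mult_nonneg_nonpos mult_nonpos_nonpos)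
      then show ?thesis unfolding T'j[OF j] using \<open>T j l \<le> 0\<close> by linarith
    qed (use T'ji j in simp)
  next
    fix j assume j: "j \<in> M - {i}"
    have "(\<Sum>l\<in>S. ?T' j l * h l) = (\<Sum>l\<in>S. T j l * h l) + (- T j i) * f * (\<Sum>l\<in>S. T i l * h l)"
      unfolding T'j[OF j]
      by (simp add: algebra_simps sum.distrib sum_distrib_left sum_subtractf sum_negf)
    moreover have "0 \<le> (- T j i) * f * (\<Sum>l\<in>S. T i l * h l)"
      using a j iM iS f(1) b by (intro mult_nonneg_nonneg) auto
    ultimately show "1 \<le> (\<Sum>l\<in>S. ?T' j l * h l)" using b j by auto
  next
    fix j p assume j: "j \<in> M - {i}" and p: "p \<in> S - (M - {i})"
    show "?T' j p = 0"
    proof (cases "p = i")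
      case False then show ?thesis using T'j[OF j] d j p iM by auto
    qed (use T'ji j in simp)
  next
    fix p assume p: "p \<in> S - (M - {i})"
    show "?T' p p = 1"
    proof (cases "p = i")
      case False then show ?thesis using p c T'o by auto
    qed (use T'i f(2) in simp)
  next
    fix p l assume p: "p \<in> S - (M - {i})" and l: "l \<in> S" and lt: "Lab l < Lab p"
    show "?T' p l = 0"
    proof (cases "p = i")
      case True
      have "l \<notin> M" using imin lt True by force
      then show ?thesis using True T'i d iM l by auto
    next
      case False then show ?thesis using p c T'o l lt by auto
    qed
  qed
qed

lemma triangularizer_unit_triangular:
  fixes Lab :: "'a \<Rightarrow> nat" and r :: "'a \<Rightarrow> real"
  assumes fS: "finite S" and q0: "\<forall>i\<in>S. \<forall>j\<in>S. 0 \<le> q i j" and h: "lyapunov_vector S q h"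
    and i: "i \<in> S"
  defines "T \<equiv> fst (tri_loop Lab (card S) S ((\<lambda>i j. idm i j - q i j), r))"
  shows "T i i = 1 \<and> (\<forall>l\<in>S. Lab l < Lab i \<longrightarrow> T i l = 0)"
proof -
  have h0: "\<forall>j\<in>S. 0 \<le> h j" using h unfolding lyapunov_vector_def by blast
  let ?P = "\<lambda>M tab. triangularizing Lab S h M (fst tab)"
  have "?P {} (tri_loop Lab (card S) S ((\<lambda>i j. idm i j - q i j), r))"
  proof (rule tri_loop_invariant[OF fS order_refl])
    show "?P S ((\<lambda>i j. idm i j - q i j), r)"
      using q0 h sum_idm_minus[OF fS]
      unfolding triangularizing_def lyapunov_vector_def by (auto simp: idm_def)
  next
    fix M and tab :: "('a \<Rightarrow> 'a \<Rightarrow> real) \<times> ('a \<Rightarrow> real)"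
    assume "finite M" "M \<noteq> {}" "?P M tab"
    then show "?P (M - {arg_min Lab (\<lambda>i. i \<in> M)})
        (tri_step tab (arg_min Lab (\<lambda>i. i \<in> M)) (M - {arg_min Lab (\<lambda>i. i \<in> M)}))"
      using triangularizing_step[OF fS h0, of M Lab "fst tab" _ "snd tab"] by simp
  qed
  then show ?thesis using i unfolding triangularizing_def T_def by auto
qed

text \<open>A stage is a row operation that only adds multiples of the pivot row to rows of larger
  label.\<close>
lemma tri_step_preserves_equations:
  fixes Lab :: "'a \<Rightarrow> nat"
  assumes ne: "M \<noteq> {}" and i_def: "i = arg_min Lab (\<lambda>i. i \<in> M)" and MS: "M \<subseteq> S"
    and eqs: "\<forall>j\<in>S. Lab j \<le> lam \<longrightarrow> (\<Sum>l\<in>S. T j l * W l) = c j"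
    and j: "j \<in> S" "Lab j \<le> lam"
  shows "(\<Sum>l\<in>S. fst (tri_step (T, c) i (M - {i})) j l * W l) = snd (tri_step (T, c) i (M - {i})) j"
proof -
  have iM: "i \<in> M" and imin: "\<forall>j\<in>M. Lab i \<le> Lab j" using arg_min_in_set[OF ne] i_def by auto
  consider "j = i" | "j \<in> M - {i}" | "j \<notin> M" by blast
  then show ?thesis
  proof cases
    case 1
    then show ?thesis using eqs j
      by (simp add: tri_step_fst tri_step_snd sum_divide_distrib[symmetric])
  next
    case 2
    have "Lab i \<le> lam" using imin 2 j by force
    then have ei: "(\<Sum>l\<in>S. T i l * W l) = c i" using eqs iM MS by auto
    define a where "a = (idm j i - T j i) * (1 / T i i)"
    have "(\<Sum>l\<in>S. fst (tri_step (T, c) i (M - {i})) j l * W l) = (\<Sum>l\<in>S. (T j l + a * T i l) * W l)"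
      using 2 unfolding tri_step_fst a_def by (intro sum.cong) (auto simp: mult.assoc)
    also have "\<dots> = (\<Sum>l\<in>S. T j l * W l) + a * (\<Sum>l\<in>S. T i l * W l)"
      by (simp add: algebra_simps sum.distrib sum_distrib_left)
    also have "\<dots> = snd (tri_step (T, c) i (M - {i})) j"
      using 2 eqs j ei unfolding tri_step_snd a_def by (simp add: algebra_simps)
    finally show ?thesis .
  next
    case 3
    then show ?thesis using iM eqs j by (auto simp: tri_step_fst tri_step_snd)
  qed
qed

lemma triangularizer_preserves_equations:
  fixes Lab :: "'a \<Rightarrow> nat"
  assumes fS: "finite S"
    and orig: "\<forall>j\<in>S. Lab j \<le> lam \<longrightarrow> (\<Sum>l\<in>S. (idm j l - q j l) * W l) = r j"
  defines "tab \<equiv> tri_loop Lab (card S) S ((\<lambda>i j. idm i j - q i j), r)"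
  shows "\<forall>j\<in>S. Lab j \<le> lam \<longrightarrow> (\<Sum>l\<in>S. fst tab j l * W l) = snd tab j"
proof -
  let ?P = "\<lambda>M tb. M \<subseteq> S \<and> (\<forall>j\<in>S. Lab j \<le> lam \<longrightarrow> (\<Sum>l\<in>S. fst tb j l * W l) = snd tb j)"
  have "?P {} tab"
    unfolding tab_def
  proof (rule tri_loop_invariant[OF fS order_refl])
    show "?P S ((\<lambda>i j. idm i j - q i j), r)" using orig by auto
  next
    fix M tb assume "finite M" "M \<noteq> {}" "?P M tb"
    then show "?P (M - {arg_min Lab (\<lambda>i. i \<in> M)})
        (tri_step tb (arg_min Lab (\<lambda>i. i \<in> M)) (M - {arg_min Lab (\<lambda>i. i \<in> M)}))"
      using tri_step_preserves_equations[of M _ Lab S lam "fst tb" W "snd tb"] by auto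
  qed
  then show ?thesis by blast
qed

section \<open>Multi-states and policies\<close>

abbreviation move :: "(nat \<Rightarrow> 'a set) \<Rightarrow> 'a set \<Rightarrow> nat \<Rightarrow> 'a \<Rightarrow> 'a set" where
  "move Nb s k j \<equiv> insert j (s - {comp Nb s k})"

locale bandits =
  fixes K :: nat and Nb :: "nat \<Rightarrow> 'a set"
  assumes K: "K \<ge> 1"
    and fin: "\<forall>k\<in>{1..K}. finite (Nb k) \<and> Nb k \<noteq> {}"
    and disj: "\<forall>k\<in>{1..K}. \<forall>l\<in>{1..K}. k \<noteq> l \<longrightarrow> Nb k \<inter> Nb l = {}"
begin

abbreviation "S \<equiv> msts K Nb"
abbreviation "N \<equiv> Nall K Nb"

lemma finite_Nb: "k \<in> {1..K} \<Longrightarrow> finite (Nb k)" using fin by blast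

lemma finite_N: "finite N" unfolding Nall_def using fin by auto

lemma Nb_subset: "k \<in> {1..K} \<Longrightarrow> Nb k \<subseteq> N" unfolding Nall_def by auto

lemma bof_eq: "k \<in> {1..K} \<Longrightarrow> j \<in> Nb k \<Longrightarrow> bof K Nb j = k"
  unfolding bof_def using disj by (intro the_equality) (simp, metis IntI empty_iff)

lemma msts_subset: "s \<in> S \<Longrightarrow> s \<subseteq> N" unfolding msts_def by auto

lemma finite_S: "finite S"
proof (rule finite_subset)
  show "S \<subseteq> Pow N" unfolding msts_def by auto
  show "finite (Pow N)" using finite_N by simp
qed

lemma comp_eq: assumes "s \<in> S" "k \<in> {1..K}" shows "s \<inter> Nb k = {comp Nb s k}"
proof -
  have "card (s \<inter> Nb k) = 1" using assms unfolding msts_def by auto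
  then obtain x where x: "s \<inter> Nb k = {x}" by (rule card_1_singletonE)
  then have "comp Nb s k = x" unfolding comp_def by simp
  then show ?thesis using x by simp
qed

lemma comp_in: "s \<in> S \<Longrightarrow> k \<in> {1..K} \<Longrightarrow> comp Nb s k \<in> s \<and> comp Nb s k \<in> Nb k"
  using comp_eq[of s k] by blast

lemma comp_char: "s \<in> S \<Longrightarrow> k \<in> {1..K} \<Longrightarrow> y \<in> s \<Longrightarrow> y \<in> Nb k \<Longrightarrow> comp Nb s k = y"
  by (metis IntI comp_eq singletonD)

lemma comp_distinct:
  assumes "s \<in> S" "k \<in> {1..K}" "k' \<in> {1..K}" "k \<noteq> k'"
  shows "comp Nb s k \<noteq> comp Nb s k'"
proof
  assume "comp Nb s k = comp Nb s k'"
  then have "comp Nb s k \<in> Nb k \<inter> Nb k'" using comp_in[OF assms(1,2)] comp_in[OF assms(1,3)] by simp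
  moreover have "Nb k \<inter> Nb k' = {}" using disj assms(2-4) by blast
  ultimately show False by simp
qed

lemma move_in_S:
  assumes s: "s \<in> S" and k: "k \<in> {1..K}" and j: "j \<in> Nb k"
  shows "move Nb s k j \<in> S"
proof -
  let ?x = "comp Nb s k"
  have "move Nb s k j \<subseteq> N" using msts_subset[OF s] Nb_subset[OF k] j by auto
  moreover have "card (move Nb s k j \<inter> Nb k') = 1" if k': "k' \<in> {1..K}" for k'
  proof (cases "k' = k")
    case True
    have "move Nb s k j \<inter> Nb k = {j}" using comp_eq[OF s k] j by auto
    then show ?thesis using True by simp
  next
    case False
    have "j \<notin> Nb k'" "?x \<notin> Nb k'" using disj j comp_in[OF s k] k k' False by blast+
    then have "move Nb s k j \<inter> Nb k' = s \<inter> Nb k'" by auto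
    then show ?thesis using comp_eq[OF s k'] by simp
  qed
  ultimately show ?thesis unfolding msts_def by auto
qed

lemma move_notin: "s \<in> S \<Longrightarrow> k \<in> {1..K} \<Longrightarrow> j \<in> Nb k \<Longrightarrow> j \<notin> s - {comp Nb s k}"
  using comp_eq[of s k] by blast

lemma comp_move_same: "s \<in> S \<Longrightarrow> k \<in> {1..K} \<Longrightarrow> j \<in> Nb k \<Longrightarrow> comp Nb (move Nb s k j) k = j"
  using move_in_S comp_char by (meson insertI1)

lemma comp_move_other:
  assumes "s \<in> S" "k \<in> {1..K}" "j \<in> Nb k" "k' \<in> {1..K}" "k' \<noteq> k"
  shows "comp Nb (move Nb s k j) k' = comp Nb s k'"
proof -
  have "comp Nb s k' \<in> move Nb s k j" "comp Nb s k' \<in> Nb k'"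
    using comp_in[OF assms(1,4)] comp_distinct[OF assms(1,2,4)] assms(5) by auto
  then show ?thesis using comp_char[OF move_in_S[OF assms(1-3)] assms(4)] by blast
qed

lemma move_comp: "s \<in> S \<Longrightarrow> k \<in> {1..K} \<Longrightarrow> move Nb s k (comp Nb s k) = s"
  using comp_in[of s k] by blast

lemma move_move:
  assumes "s \<in> S" "k \<in> {1..K}" "j \<in> Nb k"
  shows "move Nb (move Nb s k j) k l = move Nb s k l"
  unfolding comp_move_same[OF assms] using move_notin[OF assms] by auto

lemma Qpol_move:
  assumes s: "s \<in> S" and k: "\<delta> s \<in> {1..K}" and j: "j \<in> Nb (\<delta> s)"
  shows "Qpol Nb q \<delta> s (move Nb s (\<delta> s) j) = q (comp Nb s (\<delta> s)) j"
proof -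
  have "(THE j'. j' \<in> Nb (\<delta> s) \<and> move Nb s (\<delta> s) j = move Nb s (\<delta> s) j') = j"
    using j move_notin[OF s k] by (intro the_equality) blast+
  moreover have "\<exists>j'\<in>Nb (\<delta> s). move Nb s (\<delta> s) j = move Nb s (\<delta> s) j'" using j by blast
  ultimately show ?thesis unfolding Qpol_def Let_def by (simp only: if_True)
qed

lemma Qpol_not_move:
  assumes "t \<notin> move Nb s (\<delta> s) ` Nb (\<delta> s)"
  shows "Qpol Nb q \<delta> s t = 0"
proof -
  have "\<not> (\<exists>j\<in>Nb (\<delta> s). t = move Nb s (\<delta> s) j)" using assms by blast
  then show ?thesis unfolding Qpol_def Let_def by (simp only: if_False)
qed

lemma Qpol_sum:
  assumes s: "s \<in> S" and k: "\<delta> s \<in> {1..K}"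
  shows "(\<Sum>t\<in>S. Qpol Nb q \<delta> s t * g t)
     = (\<Sum>j\<in>Nb (\<delta> s). q (comp Nb s (\<delta> s)) j * g (move Nb s (\<delta> s) j))"
proof -
  let ?u = "move Nb s (\<delta> s)"
  have inj: "inj_on ?u (Nb (\<delta> s))"
    using move_notin[OF s k] by (intro inj_onI) blast
  have "(\<Sum>t\<in>S. Qpol Nb q \<delta> s t * g t) = (\<Sum>t\<in>?u ` Nb (\<delta> s). Qpol Nb q \<delta> s t * g t)"
    using finite_S move_in_S[OF s k] Qpol_not_move by (intro sum.mono_neutral_right) auto
  also have "\<dots> = (\<Sum>j\<in>Nb (\<delta> s). q (comp Nb s (\<delta> s)) j * g (?u j))"
    by (simp add: sum.reindex[OF inj] Qpol_move[where \<delta>=\<delta>, OF s k])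
  finally show ?thesis .
qed

lemma Qpol_nonneg:
  assumes s: "s \<in> S" and k: "\<delta> s \<in> {1..K}"
    and q0: "\<forall>i\<in>Nb (\<delta> s). \<forall>j\<in>Nb (\<delta> s). 0 \<le> q i j"
  shows "0 \<le> Qpol Nb q \<delta> s t"
proof (cases "t \<in> move Nb s (\<delta> s) ` Nb (\<delta> s)")
  case True
  then obtain j where "j \<in> Nb (\<delta> s)" "t = move Nb s (\<delta> s) j" by blast
  then show ?thesis using Qpol_move[where \<delta>=\<delta>, OF s k] q0 comp_in[OF s k] by simp
qed (simp add: Qpol_not_move)

section \<open>Invertibility of \<open>I - Q^\<delta>\<close>\<close>

text \<open>If the one-step data of every bandit vanish except at transitions to strictly larger
  labels, then \<open>I - Q^\<delta>\<close> is invertible for every policy \<open>\<delta>\<close>: the sum of the labels of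
  the components of a multi-state strictly increases along every transition.\<close>
lemma invertible_if_label_increasing:
  fixes Lab :: "'a \<Rightarrow> nat"
  assumes zero: "\<forall>k\<in>{1..K}. \<forall>x\<in>Nb k. \<forall>j\<in>Nb k. Lab j \<le> Lab x \<longrightarrow> q x j = 0"
    and \<delta>: "\<forall>s\<in>S. \<delta> s \<in> {1..K}"
  shows "invertible_on S (\<lambda>s t. idm s t - Qpol Nb q \<delta> s t)"
proof (rule invertible_if_no_fixed_vector[OF finite_S])
  fix X assume X: "\<forall>s\<in>S. X s = (\<Sum>t\<in>S. Qpol Nb q \<delta> s t * X t)"
  show "\<forall>s\<in>S. X s = 0"
  proof (rule potential_fixed_vector_zero[OF finite_S _ X])
    fix s t assume s: "s \<in> S" and "t \<in> S" and nz: "Qpol Nb q \<delta> s t \<noteq> 0"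
    let ?k = "\<delta> s" let ?x = "comp Nb s ?k"
    have k: "?k \<in> {1..K}" and x: "?x \<in> Nb ?k" using \<delta> s comp_in[OF s] by auto
    obtain j where j: "j \<in> Nb ?k" and t: "t = move Nb s ?k j"
      using nz Qpol_not_move[of t s \<delta> q] by blast
    have "Lab ?x < Lab j"
    proof (rule ccontr)
      assume "\<not> Lab ?x < Lab j"
      then have "q ?x j = 0" using zero k x j by simp
      then show False using nz Qpol_move[where \<delta>=\<delta>, OF s k j] t by simp
    qed
    moreover have "(\<Sum>y\<in>t. Lab y) + Lab ?x = (\<Sum>y\<in>s. Lab y) + Lab j"
    proof -
      have fs: "finite s" using msts_subset[OF s] finite_N by (rule finite_subset)
      have "(\<Sum>y\<in>s. Lab y) = Lab ?x + (\<Sum>y\<in>s - {?x}. Lab y)"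
        using sum.remove[OF fs, of ?x] comp_in[OF s k] by simp
      moreover have "(\<Sum>y\<in>t. Lab y) = Lab j + (\<Sum>y\<in>s - {?x}. Lab y)"
        using fs move_notin[OF s k j] t by simp
      ultimately show ?thesis by simp
    qed
    ultimately show "(\<Sum>y\<in>s. Lab y) < (\<Sum>y\<in>t. Lab y)" by linarith
  qed
qed

definition product_vector :: "(nat \<Rightarrow> 'a \<Rightarrow> real) \<Rightarrow> 'a set \<Rightarrow> real" where
  "product_vector h s = (\<Prod>k\<in>{1..K}. h k (comp Nb s k))"

lemma product_vector_ge_1:
  assumes q0: "\<forall>k\<in>{1..K}. \<forall>i\<in>Nb k. \<forall>j\<in>Nb k. 0 \<le> q i j"
    and h: "\<forall>k\<in>{1..K}. lyapunov_vector (Nb k) q (h k)" and s: "s \<in> S"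
  shows "1 \<le> product_vector h s"
  unfolding product_vector_def
proof (rule prod_ge_1)
  fix k assume k: "k \<in> {1..K}"
  show "1 \<le> h k (comp Nb s k)"
    using lyapunov_vector_ge_1[of "Nb k" q "h k"] h q0 comp_in[OF s k] k by blast
qed

text \<open>The product vector is a Lyapunov vector for every \<open>Q^\<delta>\<close>: moving bandit \<open>k\<close> only
  changes the \<open>k\<close>-th factor, which decreases by at least \<open>1\<close> in expectation, while the other
  factors are at least \<open>1\<close>.\<close>
lemma product_vector_decreases:
  assumes q0: "\<forall>k\<in>{1..K}. \<forall>i\<in>Nb k. \<forall>j\<in>Nb k. 0 \<le> q i j"
    and h: "\<forall>k\<in>{1..K}. lyapunov_vector (Nb k) q (h k)"
    and s: "s \<in> S" and k: "k \<in> {1..K}"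
  shows "(\<Sum>j\<in>Nb k. q (comp Nb s k) j * product_vector h (move Nb s k j)) \<le> product_vector h s - 1"
proof -
  let ?x = "comp Nb s k"
  have x: "?x \<in> Nb k" using comp_in[OF s k] by blast
  define P where "P = (\<Prod>k'\<in>{1..K} - {k}. h k' (comp Nb s k'))"
  have P1: "1 \<le> P" unfolding P_def
  proof (rule prod_ge_1)
    fix k' assume "k' \<in> {1..K} - {k}"
    then show "1 \<le> h k' (comp Nb s k')"
      using lyapunov_vector_ge_1[of "Nb k'" q "h k'"] h q0 comp_in[OF s] by blast
  qed
  have split: "product_vector h t = h k (comp Nb t k) * (\<Prod>k'\<in>{1..K} - {k}. h k' (comp Nb t k'))" for t
    unfolding product_vector_def using prod.remove[of "{1..K}" k] k by simp
  have moved: "product_vector h (move Nb s k j) = h k j * P" if j: "j \<in> Nb k" for j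
  proof -
    have "(\<Prod>k'\<in>{1..K} - {k}. h k' (comp Nb (move Nb s k j) k')) = P"
      unfolding P_def using comp_move_other[OF s k j] by (intro prod.cong) auto
    then show ?thesis unfolding split comp_move_same[OF s k j] by simp
  qed
  have "(\<Sum>j\<in>Nb k. q ?x j * product_vector h (move Nb s k j)) = (\<Sum>j\<in>Nb k. q ?x j * h k j) * P"
    using moved by (simp add: sum_distrib_right mult.assoc)
  also have "\<dots> \<le> (h k ?x - 1) * P"
  proof (rule mult_right_mono)
    show "(\<Sum>j\<in>Nb k. q ?x j * h k j) \<le> h k ?x - 1"
      using h k x unfolding lyapunov_vector_def by fastforce
  qed (use P1 in simp)
  also have "\<dots> = product_vector h s - P" unfolding split P_def by (simp add: algebra_simps)
  also have "\<dots> \<le> product_vector h s - 1" using P1 by simp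
  finally show ?thesis .
qed

lemma invertible_if_lyapunov:
  assumes q0: "\<forall>k\<in>{1..K}. \<forall>i\<in>Nb k. \<forall>j\<in>Nb k. 0 \<le> q i j"
    and h: "\<forall>k\<in>{1..K}. lyapunov_vector (Nb k) q (h k)"
    and \<delta>: "\<forall>s\<in>S. \<delta> s \<in> {1..K}"
  shows "invertible_on S (\<lambda>s t. idm s t - Qpol Nb q \<delta> s t)"
proof (rule invertible_if_no_fixed_vector[OF finite_S])
  fix X assume X: "\<forall>s\<in>S. X s = (\<Sum>t\<in>S. Qpol Nb q \<delta> s t * X t)"
  show "\<forall>s\<in>S. X s = 0"
  proof (rule lyapunov_fixed_vector_zero[OF finite_S _ _ _ X])
    fix s t assume s: "s \<in> S" and "t \<in> S"
    show "0 \<le> Qpol Nb q \<delta> s t" using Qpol_nonneg[OF s] \<delta> q0 s by blast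
  next
    fix s assume s: "s \<in> S"
    show "0 < product_vector h s" using product_vector_ge_1[OF q0 h s] by simp
    have "(\<Sum>t\<in>S. Qpol Nb q \<delta> s t * product_vector h t)
        = (\<Sum>j\<in>Nb (\<delta> s). q (comp Nb s (\<delta> s)) j * product_vector h (move Nb s (\<delta> s) j))"
      using \<delta> s by (intro Qpol_sum) auto
    also have "\<dots> \<le> product_vector h s - 1"
      using \<delta> s by (intro product_vector_decreases[OF q0 h s]) auto
    finally show "(\<Sum>t\<in>S. Qpol Nb q \<delta> s t * product_vector h t) < product_vector h s" by simp
  qed
qed

end

section \<open>The priority rule and the finalized data\<close>

locale labeled_bandits = bandits K Nb for K :: nat and Nb :: "nat \<Rightarrow> 'a set" +
  fixes L :: "'a option \<Rightarrow> nat"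
  assumes lab: "is_labeling (Nall K Nb) L"
begin

lemma label_inj: "x \<in> N \<Longrightarrow> y \<in> N \<Longrightarrow> L (Some x) = L (Some y) \<Longrightarrow> x = y"
  using lab unfolding is_labeling_def inj_on_def by auto

lemma prio_strict_min:
  assumes s: "s \<in> S"
  shows "prio K Nb L s \<in> {1..K} \<and> (\<forall>k'\<in>{1..K}. k' \<noteq> prio K Nb L s \<longrightarrow>
     L (Some (comp Nb s (prio K Nb L s))) < L (Some (comp Nb s k')))"
proof -
  let ?f = "\<lambda>k. L (Some (comp Nb s k))" let ?p = "prio K Nb L s"
  have "1 \<in> {1..K}" using K by auto
  from arg_min_nat_lemma[of "\<lambda>k. k \<in> {1..K}", OF this, of ?f]
  have p: "?p \<in> {1..K}" "\<forall>y\<in>{1..K}. ?f ?p \<le> ?f y" unfolding prio_def by auto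
  have "?f ?p < ?f k'" if k': "k' \<in> {1..K}" "k' \<noteq> ?p" for k'
  proof -
    have "comp Nb s k' \<noteq> comp Nb s ?p" using comp_distinct[OF s] p k' by metis
    moreover have "comp Nb s k' \<in> N" "comp Nb s ?p \<in> N"
      using comp_in[OF s] p k' msts_subset[OF s] by blast+
    ultimately have "?f ?p \<noteq> ?f k'" using label_inj by metis
    then show ?thesis using p k' by (simp add: order_le_neq_trans)
  qed
  then show ?thesis using p by blast
qed

lemma prio_unique:
  assumes s: "s \<in> S" and k: "k \<in> {1..K}"
    and lt: "\<forall>k'\<in>{1..K}. k' \<noteq> k \<longrightarrow> L (Some (comp Nb s k)) < L (Some (comp Nb s k'))"
  shows "prio K Nb L s = k"
proof (rule ccontr)
  assume ne: "prio K Nb L s \<noteq> k"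
  then have "L (Some (comp Nb s (prio K Nb L s))) < L (Some (comp Nb s k))"
    using prio_strict_min[OF s] k by fastforce
  moreover have "L (Some (comp Nb s k)) < L (Some (comp Nb s (prio K Nb L s)))"
    using lt prio_strict_min[OF s] ne by blast
  ultimately show False by simp
qed

text \<open>Moving the active bandit to a state of smaller label keeps it active.  This is why the
  value equations at such moves are available to the Triangularizer.\<close>
lemma prio_move_lower:
  assumes s: "s \<in> S" and j: "j \<in> Nb (prio K Nb L s)"
    and le: "L (Some j) \<le> L (Some (comp Nb s (prio K Nb L s)))"
  shows "prio K Nb L (move Nb s (prio K Nb L s) j) = prio K Nb L s"
proof -
  let ?k = "prio K Nb L s"
  have k: "?k \<in> {1..K}" using prio_strict_min[OF s] by blast
  show ?thesis
  proof (rule prio_unique[OF move_in_S[OF s k j] k], intro ballI impI)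
    fix k' assume k': "k' \<in> {1..K}" and ne: "k' \<noteq> ?k"
    have "L (Some (comp Nb s ?k)) < L (Some (comp Nb s k'))" using prio_strict_min[OF s] k' ne by blast
    then show "L (Some (comp Nb (move Nb s ?k j) ?k)) < L (Some (comp Nb (move Nb s ?k j) k'))"
      using le comp_move_same[OF s k j] comp_move_other[OF s k j k' ne] by simp
  qed
qed

lemma finalized_zero_below:
  assumes k: "k \<in> {1..K}" and q0: "\<forall>i\<in>Nb k. \<forall>j\<in>Nb k. 0 \<le> q i j"
    and h: "lyapunov_vector (Nb k) q h"
    and x: "x \<in> Nb k" and j: "j \<in> Nb k" and le: "L (Some j) \<le> L (Some x)"
  shows "qtil K Nb L q r x j = 0"
proof -
  let ?T = "fst (triangularizer L Nb q r k)"
  have T: "?T x x = 1 \<and> (\<forall>l\<in>Nb k. L (Some l) < L (Some x) \<longrightarrow> ?T x l = 0)"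
    unfolding triangularizer_def
    by (rule triangularizer_unit_triangular[OF finite_Nb[OF k] q0 h x])
  have "j = x \<or> L (Some j) < L (Some x)"
    using le label_inj Nb_subset[OF k] x j by (metis in_mono order_le_less)
  then show ?thesis using T j unfolding qtil_def bof_eq[OF k x] by (auto simp: idm_def)
qed

lemma finalized_equation:
  assumes k: "k \<in> {1..K}" and x: "x \<in> Nb k"
    and W: "\<forall>j\<in>Nb k. L (Some j) \<le> L (Some x) \<longrightarrow> W j - (\<Sum>l\<in>Nb k. q j l * W l) = r j"
  shows "W x - (\<Sum>j\<in>Nb k. qtil K Nb L q r x j * W j) = rtil K Nb L q r x"
proof -
  let ?tab = "triangularizer L Nb q r k"
  have "\<forall>j\<in>Nb k. L (Some j) \<le> L (Some x) \<longrightarrow> (\<Sum>l\<in>Nb k. (idm j l - q j l) * W l) = r j"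
    using W sum_idm_minus[OF finite_Nb[OF k]] by simp
  from triangularizer_preserves_equations[OF finite_Nb[OF k] this]
  have "(\<Sum>l\<in>Nb k. fst ?tab x l * W l) = snd ?tab x"
    using x unfolding triangularizer_def by blast
  moreover have "(\<Sum>j\<in>Nb k. qtil K Nb L q r x j * W j) = W x - (\<Sum>l\<in>Nb k. fst ?tab x l * W l)"
    unfolding qtil_def bof_eq[OF k x] using sum_idm_minus[OF finite_Nb[OF k] x] by simp
  ultimately show ?thesis unfolding rtil_def bof_eq[OF k x] by simp
qed

text \<open>At \<open>s\<close> with active bandit \<open>k\<close> and component
  \<open>x\<close>, apply the previous lemma to \<open>W(j) = V(s moved to j)\<close>: for \<open>L(j) \<le> L(x)\<close> the moved
  multi-state still activates \<open>k\<close>, so its value equation is the required row equation.\<close>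
lemma value_solves_finalized:
  assumes V: "\<forall>s\<in>S. V s - (\<Sum>t\<in>S. Qpol Nb q (prio K Nb L) s t * V t) = Rpol Nb r (prio K Nb L) s"
    and s: "s \<in> S"
  shows "V s - (\<Sum>t\<in>S. Qpol Nb (qtil K Nb L q r) (prio K Nb L) s t * V t)
       = Rpol Nb (rtil K Nb L q r) (prio K Nb L) s"
proof -
  let ?pi = "prio K Nb L" let ?k = "?pi s" let ?x = "comp Nb s ?k"
  have pis: "\<forall>s\<in>S. ?pi s \<in> {1..K}" using prio_strict_min by blast
  have k: "?k \<in> {1..K}" and x: "?x \<in> Nb ?k" using pis s comp_in[OF s] by auto
  define W where "W j = V (move Nb s ?k j)" for j
  have "W j - (\<Sum>l\<in>Nb ?k. q j l * W l) = r j" if j: "j \<in> Nb ?k" and le: "L (Some j) \<le> L (Some ?x)" for j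
  proof -
    let ?s' = "move Nb s ?k j"
    have s': "?s' \<in> S" and pi': "?pi ?s' = ?k" and cj: "comp Nb ?s' ?k = j"
      using move_in_S[OF s k j] prio_move_lower[OF s j le] comp_move_same[OF s k j] by auto
    have mv: "move Nb ?s' ?k l = move Nb s ?k l" for l by (rule move_move[OF s k j])
    have "(\<Sum>t\<in>S. Qpol Nb q ?pi ?s' t * V t) = (\<Sum>l\<in>Nb ?k. q (comp Nb ?s' ?k) l * V (move Nb ?s' ?k l))"
      using Qpol_sum[where \<delta>="?pi", OF s' pis[rule_format, OF s']] unfolding pi' .
    also have "\<dots> = (\<Sum>l\<in>Nb ?k. q j l * W l)" by (simp only: mv, simp only: cj W_def)
    finally have "(\<Sum>t\<in>S. Qpol Nb q ?pi ?s' t * V t) = (\<Sum>l\<in>Nb ?k. q j l * W l)" .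
    moreover have "V ?s' - (\<Sum>t\<in>S. Qpol Nb q ?pi ?s' t * V t) = r j"
      using V s' pi' cj unfolding Rpol_def by simp
    ultimately show ?thesis unfolding W_def by simp
  qed
  then have "W ?x - (\<Sum>j\<in>Nb ?k. qtil K Nb L q r ?x j * W j) = rtil K Nb L q r ?x"
    by (intro finalized_equation[OF k x]) blast
  moreover have "(\<Sum>t\<in>S. Qpol Nb (qtil K Nb L q r) ?pi s t * V t) = (\<Sum>j\<in>Nb ?k. qtil K Nb L q r ?x j * W j)"
    unfolding W_def by (rule Qpol_sum[where \<delta>="?pi", OF s k])
  moreover have "W ?x = V s" unfolding W_def using move_comp[OF s k] by simp
  ultimately show ?thesis unfolding Rpol_def by simp
qed

end

theorem proposition3p3:
  fixes K :: nat and Nb :: "nat \<Rightarrow> 'a set" and q :: "'a \<Rightarrow> 'a \<Rightarrow> real"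
    and r :: "'a \<Rightarrow> real" and L :: "'a option \<Rightarrow> nat"
  assumes K: "K \<ge> 1"
    and fin: "\<forall>k\<in>{1..K}. finite (Nb k) \<and> Nb k \<noteq> {}"
    and disj: "\<forall>k\<in>{1..K}. \<forall>l\<in>{1..K}. k \<noteq> l \<longrightarrow> Nb k \<inter> Nb l = {}"
    and C: "hypC K Nb q r"
    and lab: "is_labeling (Nall K Nb) L"
  shows "invertible_on (msts K Nb)
           (\<lambda>s t. idm s t - Qpol Nb (qtil K Nb L q r) (prio K Nb L) s t)
       \<and> (\<forall>s\<in>msts K Nb.
            value_vec (msts K Nb) (Qpol Nb (qtil K Nb L q r) (prio K Nb L))
                                  (Rpol Nb (rtil K Nb L q r) (prio K Nb L)) s
          = value_vec (msts K Nb) (Qpol Nb q (prio K Nb L)) (Rpol Nb r (prio K Nb L)) s)"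
proof -
  interpret labeled_bandits K Nb L using K fin disj lab by unfold_locales
  let ?pi = "prio K Nb L"
  have q0: "\<forall>k\<in>{1..K}. \<forall>i\<in>Nb k. \<forall>j\<in>Nb k. 0 \<le> q i j"
    and tr: "\<forall>k\<in>{1..K}. transient (Nb k) q" using C unfolding hypC_def by auto
  have "\<forall>k\<in>{1..K}. \<exists>h. lyapunov_vector (Nb k) q h"
    using transient_lyapunov_vector finite_Nb q0 tr by metis
  then obtain h where h: "\<forall>k\<in>{1..K}. lyapunov_vector (Nb k) q (h k)" by metis
  have pis: "\<forall>s\<in>S. ?pi s \<in> {1..K}" using prio_strict_min by blast
  have inv: "invertible_on S (\<lambda>s t. idm s t - Qpol Nb q ?pi s t)"
    by (rule invertible_if_lyapunov[OF q0 h pis])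
  have "\<forall>k\<in>{1..K}. \<forall>x\<in>Nb k. \<forall>j\<in>Nb k. L (Some j) \<le> L (Some x) \<longrightarrow> qtil K Nb L q r x j = 0"
    using finalized_zero_below q0 h by blast
  then have inv_til: "invertible_on S (\<lambda>s t. idm s t - Qpol Nb (qtil K Nb L q r) ?pi s t)"
    by (rule invertible_if_label_increasing[OF _ pis])
  define V where "V = value_vec S (Qpol Nb q ?pi) (Rpol Nb r ?pi)"
  have "\<forall>s\<in>S. V s - (\<Sum>t\<in>S. Qpol Nb q ?pi s t * V t) = Rpol Nb r ?pi s"
    unfolding V_def using value_vec_solves[OF finite_S inv] by blast
  then have "\<forall>s\<in>S. V s - (\<Sum>t\<in>S. Qpol Nb (qtil K Nb L q r) ?pi s t * V t) = Rpol Nb (rtil K Nb L q r) ?pi s"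
    using value_solves_finalized by blast
  then show ?thesis using inv_til value_vec_unique[OF finite_S inv_til] unfolding V_def by blast
qed

end
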